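(* Let $q$ be a prime power, $L$ an integer with $1\le L<q$, and $r\in[0,\frac{L}{L+1})$ with $rn\in\mathbb{N}$. If $C\subseteq\mathbb{F}_q^n$ is a linear $(r,L)$ list-decodable code, then $d(C)>rn+\lfloor\frac{rn}{L}\rfloor$.
   Context: A linear code is a subspace of $\mathbb{F}_q^n$; $d(C)$ is its minimum Hamming distance between distinct codewords. $C$ is $(r,L)$ list-decodable if every Hamming ball of radius $rn$ in $\mathbb{F}_q^n$ contains at most $L$ codewords. *)

theory Defs
  imports "HOL-Analysis.Analysis" "HOL-Library.Extended_Nat"
begin

text \<open>Vectors of F_q^n are elements of type 'a ^ 'n, with 'a a finite field (q = CARD('a))
  and n = CARD('n).\<close>

definition hamming_dist :: "'a ^ 'n \<Rightarrow> 'a ^ 'n \<Rightarrow> nat" where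
  "hamming_dist x y = card {i. x $ i \<noteq> y $ i}"

definition linear_code :: "('a::field ^ 'n) set \<Rightarrow> bool" where
  "linear_code C \<longleftrightarrow> vec.subspace C"

text \<open>Minimum distance (infinity if C has fewer than two codewords).\<close>
definition min_dist :: "('a ^ 'n) set \<Rightarrow> enat" where
  "min_dist C = (INF p \<in> {(x, y). x \<in> C \<and> y \<in> C \<and> x \<noteq> y}. enat (hamming_dist (fst p) (snd p)))"

definition list_decodable :: "real \<Rightarrow> nat \<Rightarrow> ('a ^ 'n) set \<Rightarrow> bool" where
  "list_decodable r L C \<longleftrightarrow>
     (\<forall>y. card {c \<in> C. real (hamming_dist c y) \<le> r * real CARD('n)} \<le> L)"

end

theory Submission
  imports Defs
begin

text \<open>Suppose C has a nonzero codeword c of weight w \<le> t + \<lfloor>t / L\<rfloor>, where t = r n;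
  then L w \<le> (L + 1) t. Split the support of c into L + 1 classes of size at least w - t each
  and pick distinct scalars a_0, ..., a_L (possible as L < q). The word y that agrees with a_j c
  on class j differs from a_j c in at most t positions, for every j, so the ball of radius t
  around y contains the L + 1 codewords a_j c.\<close>

definition hamming_weight :: "'a::zero ^ 'n \<Rightarrow> nat" where
  "hamming_weight c = card {i. c $ i \<noteq> 0}"

lemma hamming_dist_eq_weight_diff:
  fixes x y :: "'a::ab_group_add ^ 'n"
  shows "hamming_dist x y = hamming_weight (x - y)"
  unfolding hamming_dist_def hamming_weight_def by simp

lemma less_min_dist_iff:
  "enat k < min_dist C \<longleftrightarrow> (\<forall>x\<in>C. \<forall>y\<in>C. x \<noteq> y \<longrightarrow> k < hamming_dist x y)"
proof
  assume "enat k < min_dist C"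
  then show "\<forall>x\<in>C. \<forall>y\<in>C. x \<noteq> y \<longrightarrow> k < hamming_dist x y"
    unfolding min_dist_def by (auto dest: less_INF_D)
next
  assume "\<forall>x\<in>C. \<forall>y\<in>C. x \<noteq> y \<longrightarrow> k < hamming_dist x y"
  then have "enat (Suc k) \<le> min_dist C"
    unfolding min_dist_def by (force intro!: INF_greatest)
  then show "enat k < min_dist C"
    by (simp add: Suc_ile_eq)
qed

lemma card_block_label_neq_le:
  fixes m w L j :: nat
  assumes "0 < m" "(L + 1) * m \<le> w" "j \<le> L"
  shows "card {k \<in> {0..<w}. min L (k div m) \<noteq> j} \<le> w - m"
proof -
  have "j * m + m \<le> L * m + m"
    using \<open>j \<le> L\<close> by simp
  also have "\<dots> \<le> w"
    using assms(2) by (simp add: distrib_right)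
  finally have block: "j * m + m \<le> w" .
  have "{k \<in> {0..<w}. min L (k div m) \<noteq> j} \<subseteq> {0..<w} - {j * m..<j * m + m}"
  proof clarsimp
    fix k assume "min L (k div m) \<noteq> j" "j * m \<le> k" "k < j * m + m"
    moreover from this have "k div m = j"
      using \<open>0 < m\<close> by (metis div_nat_eqI mult.commute mult_Suc_right add.commute)
    ultimately show False
      using \<open>j \<le> L\<close> by simp
  qed
  then have "card {k \<in> {0..<w}. min L (k div m) \<noteq> j} \<le> card ({0..<w} - {j * m..<j * m + m})"
    by (rule card_mono[rotated]) simp
  also have "\<dots> = w - m"
    using block by (subst card_Diff_subset) auto
  finally show ?thesis .
qed

lemma exists_balanced_labelling:
  fixes S :: "'b set" and L t :: nat
  assumes "finite S" "L * card S \<le> (L + 1) * t"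
  obtains g :: "'b \<Rightarrow> nat"
  where "\<And>i. g i \<le> L" "\<And>j. j \<le> L \<Longrightarrow> card {i \<in> S. g i \<noteq> j} \<le> t"
proof (cases "card S \<le> t")
  case True
  have "card {i \<in> S. (0::nat) \<noteq> j} \<le> t" for j
    using card_mono[OF \<open>finite S\<close>, of "{i \<in> S. (0::nat) \<noteq> j}"] True by auto
  then show ?thesis
    using that[of "\<lambda>_. 0"] by simp
next
  case False
  define w where "w = card S"
  define m where "m = w - t"
  have "0 < m" "(L + 1) * m \<le> w"
    using False assms(2) unfolding m_def w_def by (simp_all add: algebra_simps diff_mult_distrib2)
  obtain f where f: "bij_betw f S {0..<w}"
    using ex_bij_betw_finite_nat[OF \<open>finite S\<close>] unfolding w_def by blast
  define g where "g i = min L (f i div m)" for i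
  have "card {i \<in> S. g i \<noteq> j} \<le> t" if "j \<le> L" for j
  proof -
    have "bij_betw f {i \<in> S. g i \<noteq> j} {k \<in> {0..<w}. min L (k div m) \<noteq> j}"
      using f unfolding g_def bij_betw_def inj_on_def by auto
    then have "card {i \<in> S. g i \<noteq> j} = card {k \<in> {0..<w}. min L (k div m) \<noteq> j}"
      by (rule bij_betw_same_card)
    also have "\<dots> \<le> w - m"
      using card_block_label_neq_le[OF \<open>0 < m\<close> \<open>(L + 1) * m \<le> w\<close> that] .
    finally show ?thesis
      using False unfolding m_def w_def by simp
  qed
  then show ?thesis
    using that[of g] unfolding g_def by simp
qed

lemma hamming_dist_scale_labelled:
  fixes c :: "'a::field ^ 'n" and a :: "'b \<Rightarrow> 'a"
  assumes "inj_on a A" "j \<in> A" "\<And>i. g i \<in> A"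
  shows "hamming_dist (a j *s c) (\<chi> i. a (g i) * c $ i) = card {i \<in> {i. c $ i \<noteq> 0}. g i \<noteq> j}"
proof -
  have "a j * c $ i \<noteq> a (g i) * c $ i \<longleftrightarrow> c $ i \<noteq> 0 \<and> g i \<noteq> j" for i
    using inj_on_eq_iff[OF assms(1) \<open>j \<in> A\<close> assms(3)[of i]] by auto
  then show ?thesis
    unfolding hamming_dist_def by simp
qed

lemma ex_ball_card_ge_if_hamming_weight_le:
  fixes C :: "('a::{finite,field} ^ 'n) set" and L t :: nat
  assumes "vec.subspace C" "c \<in> C" "c \<noteq> 0" "L < CARD('a)"
    and "L * hamming_weight c \<le> (L + 1) * t"
  shows "\<exists>y. L + 1 \<le> card {x \<in> C. hamming_dist x y \<le> t}"
proof -
  obtain a :: "nat \<Rightarrow> 'a" where "bij_betw a {0..<CARD('a)} UNIV"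
    using ex_bij_betw_nat_finite[of "UNIV :: 'a set"] by auto
  then have inj_a: "inj_on a {0..L}"
    using \<open>L < CARD('a)\<close> by (auto intro: inj_on_subset dest: bij_betw_imp_inj_on)
  obtain g :: "'n \<Rightarrow> nat" where g_le: "\<And>i. g i \<le> L"
    and g_classes: "\<And>j. j \<le> L \<Longrightarrow> card {i \<in> {i. c $ i \<noteq> 0}. g i \<noteq> j} \<le> t"
    using exists_balanced_labelling[of "{i. c $ i \<noteq> 0}" L t] assms(5)
    unfolding hamming_weight_def by auto
  define y where "y = (\<chi> i. a (g i) * c $ i)"
  have "hamming_dist (a j *s c) y \<le> t" if "j \<le> L" for j
    using hamming_dist_scale_labelled[OF inj_a, of j g c] g_le g_classes[OF that] that
    unfolding y_def by simp
  then have "(\<lambda>j. a j *s c) ` {0..L} \<subseteq> {x \<in> C. hamming_dist x y \<le> t}"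
    using vec.subspace_scale[OF assms(1,2)] by auto
  then have "card ((\<lambda>j. a j *s c) ` {0..L}) \<le> card {x \<in> C. hamming_dist x y \<le> t}"
    by (intro card_mono) simp_all
  moreover have "inj_on (\<lambda>j. a j *s c) {0..L}"
    using inj_a \<open>c \<noteq> 0\<close> by (auto simp: inj_on_def)
  then have "card ((\<lambda>j. a j *s c) ` {0..L}) = L + 1"
    by (simp add: card_image)
  ultimately show ?thesis
    by auto
qed

lemma hamming_weight_gt_if_balls_small:
  fixes C :: "('a::{finite,field} ^ 'n) set" and L t :: nat
  assumes "vec.subspace C" "L < CARD('a)"
    and balls: "\<And>y. card {x \<in> C. hamming_dist x y \<le> t} \<le> L"
    and "c \<in> C" "c \<noteq> 0"
  shows "t + t div L < hamming_weight c"
proof (rule ccontr)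
  assume "\<not> t + t div L < hamming_weight c"
  then have "L * hamming_weight c \<le> L * (t + t div L)"
    by simp
  also have "\<dots> \<le> (L + 1) * t"
    by (simp add: distrib_left)
  finally obtain y where "L + 1 \<le> card {x \<in> C. hamming_dist x y \<le> t}"
    using ex_ball_card_ge_if_hamming_weight_le assms by blast
  with balls[of y] show False
    by simp
qed

theorem proposition6p4:
  fixes C :: "('a::{finite,field} ^ 'n) set" and q L :: nat and r :: real
  assumes "CARD('a) = q"
    and "1 \<le> L" and "L < q"
    and "0 \<le> r" and "r < real L / (real L + 1)"
    and "r * real CARD('n) \<in> \<nat>"
    and "linear_code C"
    and "list_decodable r L C"
  shows "min_dist C > enat (nat \<lfloor>r * real CARD('n)\<rfloor> + nat \<lfloor>r * real CARD('n) / real L\<rfloor>)"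
proof -
  obtain t :: nat where t: "r * real CARD('n) = real t"
    using assms(6) by (auto elim: Nats_cases)
  have "\<lfloor>real t / real L\<rfloor> = int (t div L)"
    using floor_divide_of_nat_eq[of t L] by simp
  then have bound: "nat \<lfloor>r * real CARD('n)\<rfloor> + nat \<lfloor>r * real CARD('n) / real L\<rfloor> = t + t div L"
    using t by simp
  have subspace: "vec.subspace C"
    using assms(7) unfolding linear_code_def .
  have balls: "card {x \<in> C. hamming_dist x y \<le> t} \<le> L" for y
    using assms(8) t unfolding list_decodable_def by simp
  have "t + t div L < hamming_dist x y" if "x \<in> C" "y \<in> C" "x \<noteq> y" for x y
    using hamming_weight_gt_if_balls_small[OF subspace _ balls] vec.subspace_diff[OF subspace] that assms(1,3)
    by (simp add: hamming_dist_eq_weight_diff)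
  then show ?thesis
    unfolding bound less_min_dist_iff by blast
qed

end
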